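(* Let $M=(Q,\Sigma,\Delta,Q_\alpha,F)$ be a simple NFA and let $M_\circlearrowleft=(Q,\Sigma,\Delta_\circlearrowleft,Q_\alpha,F)$, where $\Delta_\circlearrowleft(q,\sigma)=\{q\}\cup\Delta(q,\sigma)$ if $q\in Q_\alpha$ and $\Delta_\circlearrowleft(q,\sigma)=\Delta(q,\sigma)$ otherwise. Then $M_\circlearrowleft$ is simple if and only if there do not exist $\sigma\in\Sigma$, $q_\alpha\in Q_\alpha$ and $q\in Q$ with $q\neq q_\alpha$ such that $q_\alpha\in\Delta(q,\sigma)$.
   Context: An NFA is a tuple $M=(Q,\Sigma,\Delta,Q_\alpha,F)$ where $Q$ is a finite set of states, $\Sigma$ a finite alphabet, $\Delta:Q\times\Sigma\to\mathcal{P}(Q)$ the transition function, $Q_\alpha\subseteq Q$ the set of start states and $F\subseteq Q$ the set of accepting states. $\Delta$ is extended to strings by $\hat\Delta(q,\varepsilon)=\{q\}$ and $\hat\Delta(q,\sigma s)=\bigcup_{p\in\Delta(q,\sigma)}\hat\Delta(p,s)$. The language of a state $q$ is $\mathcal{L}(q)=\{s\in\Sigma^*:\hat\Delta(q,s)\cap F\neq\emptyset\}$ (computed with respect to the transition function of the automaton under consideration). A state $q$ is accessible if $q\in\hat\Delta(q_\alpha,s)$ for some $q_\alpha\in Q_\alpha$, $s\in\Sigma^*$. An NFA is called simple if all its states are accessible and the languages $\mathcal{L}(q)$, $q\in Q$, are non-empty and pairwise disjoint. *)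

theory Defs
  imports Main
begin

definition nfa :: "'q set \<Rightarrow> 'a set \<Rightarrow> ('q \<Rightarrow> 'a \<Rightarrow> 'q set) \<Rightarrow> 'q set \<Rightarrow> 'q set \<Rightarrow> bool" where
  "nfa Q \<Sigma> \<Delta> Qa F \<longleftrightarrow> finite Q \<and> finite \<Sigma> \<and> Qa \<subseteq> Q \<and> F \<subseteq> Q \<and>
     (\<forall>q\<in>Q. \<forall>\<sigma>\<in>\<Sigma>. \<Delta> q \<sigma> \<subseteq> Q)"

fun ext_delta :: "('q \<Rightarrow> 'a \<Rightarrow> 'q set) \<Rightarrow> 'q \<Rightarrow> 'a list \<Rightarrow> 'q set" where
  "ext_delta \<Delta> q [] = {q}"
| "ext_delta \<Delta> q (\<sigma> # s) = (\<Union>p\<in>\<Delta> q \<sigma>. ext_delta \<Delta> p s)"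

definition lang :: "'a set \<Rightarrow> ('q \<Rightarrow> 'a \<Rightarrow> 'q set) \<Rightarrow> 'q set \<Rightarrow> 'q \<Rightarrow> 'a list set" where
  "lang \<Sigma> \<Delta> F q = {s. set s \<subseteq> \<Sigma> \<and> ext_delta \<Delta> q s \<inter> F \<noteq> {}}"

definition accessible :: "'a set \<Rightarrow> ('q \<Rightarrow> 'a \<Rightarrow> 'q set) \<Rightarrow> 'q set \<Rightarrow> 'q \<Rightarrow> bool" where
  "accessible \<Sigma> \<Delta> Qa q \<longleftrightarrow> (\<exists>qa\<in>Qa. \<exists>s. set s \<subseteq> \<Sigma> \<and> q \<in> ext_delta \<Delta> qa s)"

definition simple_nfa :: "'q set \<Rightarrow> 'a set \<Rightarrow> ('q \<Rightarrow> 'a \<Rightarrow> 'q set) \<Rightarrow> 'q set \<Rightarrow> 'q set \<Rightarrow> bool" where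
  "simple_nfa Q \<Sigma> \<Delta> Qa F \<longleftrightarrow>
     (\<forall>q\<in>Q. accessible \<Sigma> \<Delta> Qa q) \<and>
     (\<forall>q\<in>Q. lang \<Sigma> \<Delta> F q \<noteq> {}) \<and>
     (\<forall>q\<in>Q. \<forall>p\<in>Q. q \<noteq> p \<longrightarrow> lang \<Sigma> \<Delta> F q \<inter> lang \<Sigma> \<Delta> F p = {})"

definition loop_delta :: "('q \<Rightarrow> 'a \<Rightarrow> 'q set) \<Rightarrow> 'q set \<Rightarrow> 'q \<Rightarrow> 'a \<Rightarrow> 'q set" where
  "loop_delta \<Delta> Qa q \<sigma> = (if q \<in> Qa then {q} \<union> \<Delta> q \<sigma> else \<Delta> q \<sigma>)"

end

theory Submission
  imports Defs
begin

(* Adding self-loops at the start states only enlarges runs, so accessibility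
   and non-emptiness of the languages carry over from M to the looped automaton; the whole
   question is whether the languages stay pairwise disjoint.
   Necessity: an edge q --sigma--> qa into a start state qa from some q ~= qa gives a word
   sigma v accepted from both q and qa (the latter using the new loop at qa).
   Sufficiency: if no start state has an incoming edge from another state, every run of the
   looped automaton from q consists of some loops at q (only if q is a start state)
   followed by a run of M from q.  So two states sharing a word x in the looped automaton
   give factorisations x = u1 v1 = u2 v2 with v1 in L(q), v2 in L(p).  In an NFA with
   pairwise disjoint languages the suffix v2 determines the state reached after reading
   the remaining prefix w of v1, so p is reached from q by w in M; either w is empty, or
   p is a start state, which (having no incoming edges) can only be reached from itself. *)

lemma ext_delta_mono:
  assumes "\<And>q \<sigma>. \<Delta> q \<sigma> \<subseteq> \<Delta>' q \<sigma>"
  shows "ext_delta \<Delta> q s \<subseteq> ext_delta \<Delta>' q s"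
  using assms by (induction s arbitrary: q) fastforce+

lemma ext_delta_append:
  "ext_delta \<Delta> q (w @ v) = (\<Union>r\<in>ext_delta \<Delta> q w. ext_delta \<Delta> r v)"
  by (induction w arbitrary: q) auto

lemma nfa_transition_closed:
  "nfa Q \<Sigma> \<Delta> Qa F \<Longrightarrow> q \<in> Q \<Longrightarrow> a \<in> \<Sigma> \<Longrightarrow> p \<in> \<Delta> q a \<Longrightarrow> p \<in> Q"
  unfolding nfa_def by blast

lemma ext_delta_closed:
  assumes "nfa Q \<Sigma> \<Delta> Qa F" "q \<in> Q" "set s \<subseteq> \<Sigma>" "r \<in> ext_delta \<Delta> q s"
  shows "r \<in> Q"
  using assms(2-4)
proof (induction s arbitrary: q)
  case Nil
  then show ?case by simp
next
  case (Cons a s)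
  then obtain p where p: "p \<in> \<Delta> q a" "r \<in> ext_delta \<Delta> p s" by auto
  have "p \<in> Q" using nfa_transition_closed[OF assms(1) Cons.prems(1) _ p(1)] Cons.prems(2) by simp
  with Cons.IH Cons.prems(2) p(2) show ?case by simp
qed

lemma disjoint_langs_suffix_determines_state:
  assumes nfa: "nfa Q \<Sigma> \<Delta> Qa F"
    and disjoint: "\<forall>q\<in>Q. \<forall>p\<in>Q. q \<noteq> p \<longrightarrow> lang \<Sigma> \<Delta> F q \<inter> lang \<Sigma> \<Delta> F p = {}"
    and "q \<in> Q" "p \<in> Q" "w @ v \<in> lang \<Sigma> \<Delta> F q" "v \<in> lang \<Sigma> \<Delta> F p"
  shows "p \<in> ext_delta \<Delta> q w"
proof -
  from assms(5) obtain f r where f: "set w \<subseteq> \<Sigma>" "set v \<subseteq> \<Sigma>" "f \<in> F"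
      "r \<in> ext_delta \<Delta> q w" "f \<in> ext_delta \<Delta> r v"
    unfolding lang_def by (auto simp: ext_delta_append)
  have "r \<in> Q" using ext_delta_closed[OF nfa \<open>q \<in> Q\<close> f(1,4)] .
  moreover have "v \<in> lang \<Sigma> \<Delta> F r" using f unfolding lang_def by auto
  ultimately have "r = p" using disjoint assms(4,6) by blast
  with f(4) show ?thesis by simp
qed

lemma delta_subset_loop_delta: "\<Delta> q \<sigma> \<subseteq> loop_delta \<Delta> Qa q \<sigma>"
  by (auto simp: loop_delta_def)

lemma ext_delta_subset_loop: "ext_delta \<Delta> q s \<subseteq> ext_delta (loop_delta \<Delta> Qa) q s"
  by (rule ext_delta_mono[OF delta_subset_loop_delta])

lemma lang_subset_loop_lang: "lang \<Sigma> \<Delta> F q \<subseteq> lang \<Sigma> (loop_delta \<Delta> Qa) F q"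
  unfolding lang_def using ext_delta_subset_loop[of \<Delta> q _ Qa] by fastforce

lemma accessible_loop:
  "accessible \<Sigma> \<Delta> Qa q \<Longrightarrow> accessible \<Sigma> (loop_delta \<Delta> Qa) Qa q"
  unfolding accessible_def using ext_delta_subset_loop[of \<Delta> _ _ Qa] by fastforce

definition entry_free :: "'q set \<Rightarrow> 'a set \<Rightarrow> ('q \<Rightarrow> 'a \<Rightarrow> 'q set) \<Rightarrow> 'q set \<Rightarrow> bool" where
  "entry_free Q \<Sigma> \<Delta> Qa \<longleftrightarrow> (\<forall>\<sigma>\<in>\<Sigma>. \<forall>qa\<in>Qa. \<forall>q\<in>Q. qa \<in> \<Delta> q \<sigma> \<longrightarrow> q = qa)"

lemma entry_free_run_to_start:
  assumes nfa: "nfa Q \<Sigma> \<Delta> Qa F" and ef: "entry_free Q \<Sigma> \<Delta> Qa"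
    and "p \<in> Qa" "q \<in> Q" "set w \<subseteq> \<Sigma>" "p \<in> ext_delta \<Delta> q w"
  shows "p = q"
  using assms(4-6)
proof (induction w arbitrary: q)
  case Nil
  then show ?case by simp
next
  case (Cons a w)
  then obtain q' where q': "q' \<in> \<Delta> q a" "p \<in> ext_delta \<Delta> q' w" by auto
  have "q' \<in> Q" using nfa_transition_closed[OF nfa Cons.prems(1) _ q'(1)] Cons.prems(2) by simp
  with Cons.IH Cons.prems(2) q'(2) have "p = q'" by simp
  moreover have "a \<in> \<Sigma>" using Cons.prems(2) by simp
  ultimately show ?case using ef q'(1) Cons.prems(1) \<open>p \<in> Qa\<close> unfolding entry_free_def by blast
qed

lemma entry_free_loop_run:
  assumes nfa: "nfa Q \<Sigma> \<Delta> Qa F" and ef: "entry_free Q \<Sigma> \<Delta> Qa"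
    and "q \<in> Q" "set s \<subseteq> \<Sigma>" "r \<in> ext_delta (loop_delta \<Delta> Qa) q s"
  shows "\<exists>u v. s = u @ v \<and> r \<in> ext_delta \<Delta> q v \<and> (u = [] \<or> q \<in> Qa)"
  using assms(3-5)
proof (induction s arbitrary: q)
  case Nil
  then show ?case by simp
next
  case (Cons a s)
  then obtain p where p: "p \<in> loop_delta \<Delta> Qa q a" "r \<in> ext_delta (loop_delta \<Delta> Qa) p s"
    by auto
  show ?case
  proof (cases "p \<in> \<Delta> q a")
    case step: True
    have "p \<in> Q" using nfa_transition_closed[OF nfa Cons.prems(1) _ step] Cons.prems(2) by simp
    then obtain u v where uv: "s = u @ v" "r \<in> ext_delta \<Delta> p v" "u = [] \<or> p \<in> Qa"
      using Cons.IH[OF \<open>p \<in> Q\<close> _ p(2)] Cons.prems(2) by auto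
    show ?thesis
    proof (cases "u = []")
      case True
      with uv step show ?thesis by (intro exI[of _ "[]"] exI[of _ "a # v"]) auto
    next
      case False
      with uv have "p \<in> Qa" by simp
      moreover have "a \<in> \<Sigma>" using Cons.prems(2) by simp
      ultimately have "p = q" using ef step Cons.prems(1) unfolding entry_free_def by blast
      with uv \<open>p \<in> Qa\<close> show ?thesis by (intro exI[of _ "a # u"] exI[of _ v]) auto
    qed
  next
    case False
    with p(1) have "p = q" "q \<in> Qa" by (auto simp: loop_delta_def split: if_splits)
    then obtain u v where "s = u @ v" "r \<in> ext_delta \<Delta> q v"
      using Cons.IH[OF Cons.prems(1)] p(2) Cons.prems(2) by auto
    with \<open>q \<in> Qa\<close> show ?thesis by (intro exI[of _ "a # u"] exI[of _ v]) auto
  qed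
qed

lemma entry_free_loop_lang:
  assumes nfa: "nfa Q \<Sigma> \<Delta> Qa F" and ef: "entry_free Q \<Sigma> \<Delta> Qa"
    and "q \<in> Q" "x \<in> lang \<Sigma> (loop_delta \<Delta> Qa) F q"
  shows "\<exists>u v. x = u @ v \<and> v \<in> lang \<Sigma> \<Delta> F q \<and> (u = [] \<or> q \<in> Qa)"
proof -
  from assms(4) obtain f where f: "set x \<subseteq> \<Sigma>" "f \<in> F" "f \<in> ext_delta (loop_delta \<Delta> Qa) q x"
    unfolding lang_def by blast
  with entry_free_loop_run[OF nfa ef \<open>q \<in> Q\<close>] obtain u v
    where "x = u @ v" "f \<in> ext_delta \<Delta> q v" "u = [] \<or> q \<in> Qa" by blast
  with f show ?thesis unfolding lang_def by auto
qed

text \<open>Necessity: an edge from q into a different start state qa makes the looped languages of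
  q and qa overlap, since sigma v is accepted from qa by first looping at qa.\<close>
lemma entry_gives_common_word:
  assumes "\<sigma> \<in> \<Sigma>" "qa \<in> Qa" "qa \<in> \<Delta> q \<sigma>" "v \<in> lang \<Sigma> \<Delta> F qa"
  shows "\<sigma> # v \<in> lang \<Sigma> (loop_delta \<Delta> Qa) F q \<inter> lang \<Sigma> (loop_delta \<Delta> Qa) F qa"
proof -
  have v: "v \<in> lang \<Sigma> (loop_delta \<Delta> Qa) F qa"
    using lang_subset_loop_lang assms(4) by (rule subsetD)
  have "qa \<in> loop_delta \<Delta> Qa q \<sigma>" "qa \<in> loop_delta \<Delta> Qa qa \<sigma>"
    using assms(2,3) by (auto simp: loop_delta_def)
  with v assms(1) show ?thesis unfolding lang_def by auto
qed

lemma entry_free_factorisations_same_state: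
  assumes nfa: "nfa Q \<Sigma> \<Delta> Qa F" and ef: "entry_free Q \<Sigma> \<Delta> Qa"
    and disjoint: "\<forall>q\<in>Q. \<forall>p\<in>Q. q \<noteq> p \<longrightarrow> lang \<Sigma> \<Delta> F q \<inter> lang \<Sigma> \<Delta> F p = {}"
    and "q \<in> Q" "p \<in> Q" "u1 @ v1 = u2 @ v2" "length u1 \<le> length u2"
    and "v1 \<in> lang \<Sigma> \<Delta> F q" "v2 \<in> lang \<Sigma> \<Delta> F p" "u2 = [] \<or> p \<in> Qa"
  shows "q = p"
proof -
  define w where "w = drop (length u1) u2"
  have v1: "v1 = w @ v2"
    using assms(6,7) unfolding w_def by (simp add: append_eq_append_conv_if)
  have reach: "p \<in> ext_delta \<Delta> q w"
    using disjoint_langs_suffix_determines_state[OF nfa disjoint \<open>q \<in> Q\<close> \<open>p \<in> Q\<close>] assms(8,9) v1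
    by simp
  show ?thesis
  proof (cases "w = []")
    case True
    with reach show ?thesis by simp
  next
    case False
    then have "p \<in> Qa" using assms(10) unfolding w_def by auto
    moreover have "set w \<subseteq> \<Sigma>" using assms(8) v1 unfolding lang_def by auto
    ultimately have "p = q" using entry_free_run_to_start[OF nfa ef _ \<open>q \<in> Q\<close> _ reach] by blast
    then show ?thesis by simp
  qed
qed

lemma entry_free_loop_langs_disjoint:
  assumes nfa: "nfa Q \<Sigma> \<Delta> Qa F" and ef: "entry_free Q \<Sigma> \<Delta> Qa"
    and disjoint: "\<forall>q\<in>Q. \<forall>p\<in>Q. q \<noteq> p \<longrightarrow> lang \<Sigma> \<Delta> F q \<inter> lang \<Sigma> \<Delta> F p = {}"
    and "q \<in> Q" "p \<in> Q" "x \<in> lang \<Sigma> (loop_delta \<Delta> Qa) F q" "x \<in> lang \<Sigma> (loop_delta \<Delta> Qa) F p"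
  shows "q = p"
proof -
  note same = entry_free_factorisations_same_state[OF nfa ef disjoint]
  obtain u1 v1 where 1: "x = u1 @ v1" "v1 \<in> lang \<Sigma> \<Delta> F q" "u1 = [] \<or> q \<in> Qa"
    using entry_free_loop_lang[OF nfa ef \<open>q \<in> Q\<close> assms(6)] by blast
  obtain u2 v2 where 2: "x = u2 @ v2" "v2 \<in> lang \<Sigma> \<Delta> F p" "u2 = [] \<or> p \<in> Qa"
    using entry_free_loop_lang[OF nfa ef \<open>p \<in> Q\<close> assms(7)] by blast
  show ?thesis
  proof (cases "length u1 \<le> length u2")
    case True
    show ?thesis by (rule same[OF \<open>q \<in> Q\<close> \<open>p \<in> Q\<close>]) (use 1 2 True in auto)
  next
    case False
    have "p = q" by (rule same[OF \<open>p \<in> Q\<close> \<open>q \<in> Q\<close>]) (use 1 2 False in auto)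
    then show ?thesis by simp
  qed
qed

lemma loop_simple_imp_entry_free:
  assumes nfa: "nfa Q \<Sigma> \<Delta> Qa F" and simple: "simple_nfa Q \<Sigma> \<Delta> Qa F"
    and looped: "simple_nfa Q \<Sigma> (loop_delta \<Delta> Qa) Qa F"
  shows "entry_free Q \<Sigma> \<Delta> Qa"
  unfolding entry_free_def
proof (intro ballI impI, rule ccontr)
  fix \<sigma> qa q assume edge: "\<sigma> \<in> \<Sigma>" "qa \<in> Qa" "q \<in> Q" "qa \<in> \<Delta> q \<sigma>" "q \<noteq> qa"
  have "qa \<in> Q" using nfa edge(2) unfolding nfa_def by blast
  then obtain v where "v \<in> lang \<Sigma> \<Delta> F qa" using simple unfolding simple_nfa_def by blast
  with edge(1,2,4)
  have "\<sigma> # v \<in> lang \<Sigma> (loop_delta \<Delta> Qa) F q \<inter> lang \<Sigma> (loop_delta \<Delta> Qa) F qa"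
    by (rule entry_gives_common_word)
  moreover have "lang \<Sigma> (loop_delta \<Delta> Qa) F q \<inter> lang \<Sigma> (loop_delta \<Delta> Qa) F qa = {}"
    using looped edge(3,5) \<open>qa \<in> Q\<close> unfolding simple_nfa_def by blast
  ultimately show False by blast
qed

lemma entry_free_imp_loop_simple:
  assumes nfa: "nfa Q \<Sigma> \<Delta> Qa F" and simple: "simple_nfa Q \<Sigma> \<Delta> Qa F"
    and ef: "entry_free Q \<Sigma> \<Delta> Qa"
  shows "simple_nfa Q \<Sigma> (loop_delta \<Delta> Qa) Qa F"
proof -
  have disjoint: "\<forall>q\<in>Q. \<forall>p\<in>Q. q \<noteq> p \<longrightarrow> lang \<Sigma> \<Delta> F q \<inter> lang \<Sigma> \<Delta> F p = {}"
    using simple unfolding simple_nfa_def by blast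
  show ?thesis
    unfolding simple_nfa_def
  proof (intro conjI ballI impI)
    fix q assume "q \<in> Q"
    then have acc: "accessible \<Sigma> \<Delta> Qa q" and nonempty: "lang \<Sigma> \<Delta> F q \<noteq> {}"
      using simple unfolding simple_nfa_def by blast+
    from acc show "accessible \<Sigma> (loop_delta \<Delta> Qa) Qa q" by (rule accessible_loop)
    from nonempty show "lang \<Sigma> (loop_delta \<Delta> Qa) F q \<noteq> {}"
      using lang_subset_loop_lang[of \<Sigma> \<Delta> F q Qa] by blast
  next
    fix q p assume "q \<in> Q" "p \<in> Q" "q \<noteq> p"
    then show "lang \<Sigma> (loop_delta \<Delta> Qa) F q \<inter> lang \<Sigma> (loop_delta \<Delta> Qa) F p = {}"
      using entry_free_loop_langs_disjoint[OF nfa ef disjoint] by blast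
  qed
qed

theorem mainTheorem2:
  fixes Q :: "'q set" and \<Sigma> :: "'a set" and \<Delta> :: "'q \<Rightarrow> 'a \<Rightarrow> 'q set"
    and Qa F :: "'q set"
  assumes "nfa Q \<Sigma> \<Delta> Qa F"
    and "simple_nfa Q \<Sigma> \<Delta> Qa F"
  shows "simple_nfa Q \<Sigma> (loop_delta \<Delta> Qa) Qa F \<longleftrightarrow>
         \<not> (\<exists>\<sigma>\<in>\<Sigma>. \<exists>qa\<in>Qa. \<exists>q\<in>Q. q \<noteq> qa \<and> qa \<in> \<Delta> q \<sigma>)"
proof -
  have "simple_nfa Q \<Sigma> (loop_delta \<Delta> Qa) Qa F \<longleftrightarrow> entry_free Q \<Sigma> \<Delta> Qa"
    using loop_simple_imp_entry_free[OF assms] entry_free_imp_loop_simple[OF assms] by blast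
  moreover have "entry_free Q \<Sigma> \<Delta> Qa \<longleftrightarrow> \<not> (\<exists>\<sigma>\<in>\<Sigma>. \<exists>qa\<in>Qa. \<exists>q\<in>Q. q \<noteq> qa \<and> qa \<in> \<Delta> q \<sigma>)"
    unfolding entry_free_def by blast
  ultimately show ?thesis by simp
qed

end
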